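(* For $k=o(n)$, $\mathsf{m}^{rd}(+\infty,S_{n,k})=\frac{1+o_k(1)}{2\sqrt{k}}$.
   Context: $S_{n,k}\in\{0,1\}^{\binom{n}{k}\times n}$ is the matrix whose rows are all the distinct vectors in $\{0,1\}^n$ with exactly $k$ ones, each appearing exactly once. For $A\in\{0,1\}^{N\times n}$ and $m\ge0$, unit vectors $U_1,\dots,U_N,V_1,\dots,V_n\in\mathbb{R}^d$ form a margin-$m$, relative-bias-$0$ embedding of $A$ if $\langle U_j,V_i\rangle\ge m$ whenever $A_{ji}=1$ and $\langle U_j,V_i\rangle\le -m$ whenever $A_{ji}=0$. $\mathsf{m}^{rd}(d,A)$ is the supremum of such $m$ in dimension $d$ ($-\infty$ if none), and $\mathsf{m}^{rd}(+\infty,A)=\sup_d\mathsf{m}^{rd}(d,A)$. *)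

theory Defs
  imports Complex_Main "HOL-Library.Extended_Real"
begin

(* Vectors in R^d are represented as functions nat => real; only coordinates < d matter. *)
definition dinner :: "nat \<Rightarrow> (nat \<Rightarrow> real) \<Rightarrow> (nat \<Rightarrow> real) \<Rightarrow> real" where
  "dinner d u v = (\<Sum>i<d. u i * v i)"

definition unitvec :: "nat \<Rightarrow> (nat \<Rightarrow> real) \<Rightarrow> bool" where
  "unitvec d u \<longleftrightarrow> dinner d u u = 1"

(* A 0/1 matrix with row index set R and columns {..<n}; A j i = True means entry 1.
   Margin-m, relative-bias-0 embedding in dimension d. *)
definition rd_embedding ::
  "nat \<Rightarrow> 'r set \<Rightarrow> nat \<Rightarrow> ('r \<Rightarrow> nat \<Rightarrow> bool) \<Rightarrow> real \<Rightarrow> bool" where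
  "rd_embedding d R n A m \<longleftrightarrow> m \<ge> 0 \<and>
     (\<exists>U V. (\<forall>j\<in>R. unitvec d (U j)) \<and> (\<forall>i<n. unitvec d (V i)) \<and>
        (\<forall>j\<in>R. \<forall>i<n. (A j i \<longrightarrow> dinner d (U j) (V i) \<ge> m) \<and>
                        (\<not> A j i \<longrightarrow> dinner d (U j) (V i) \<le> - m)))"

(* m^rd(d,A): supremum of achievable margins; Sup {} = -\<infinity> in ereal. *)
definition m_rd :: "nat \<Rightarrow> 'r set \<Rightarrow> nat \<Rightarrow> ('r \<Rightarrow> nat \<Rightarrow> bool) \<Rightarrow> ereal" where
  "m_rd d R n A = Sup (ereal ` {m. rd_embedding d R n A m})"

definition m_rd_inf :: "'r set \<Rightarrow> nat \<Rightarrow> ('r \<Rightarrow> nat \<Rightarrow> bool) \<Rightarrow> ereal" where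
  "m_rd_inf R n A = (SUP d. m_rd d R n A)"

(* S_{n,k}: rows are exactly the k-subsets of {..<n} (each once), entry (S,i) is 1 iff i \<in> S. *)
definition S_rows :: "nat \<Rightarrow> nat \<Rightarrow> nat set set" where
  "S_rows n k = {S. S \<subseteq> {..<n} \<and> card S = k}"

definition S_mat :: "nat set \<Rightarrow> nat \<Rightarrow> bool" where
  "S_mat S i \<longleftrightarrow> i \<in> S"

end

(* Upper bound: test each row vector U_S against Z_S = n * (sum of V_i over i in S) - k * (sum of
   all V_i), whose coefficients are n - k on S and -k off S. The sign pattern of the embedding gives
   <U_S, Z_S> >= 2k(n-k)m, whereas the sum of |Z_S|^2 over all k-subsets S is a hypergeometric
   variance: (n-1) * sum_S |Z_S|^2 <= k(n-k) * (n choose k) * n^2. Cauchy-Schwarz then yields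
   4k(n-k)(n-1)m^2 <= n^2, so m <= n / (2 sqrt k (n-k)) = (1 + O(k/n)) / (2 sqrt k).
   Lower bound: in dimension n+1, V_i = sqrt(1-c) e_i + sqrt c e_n and
   U_S = sqrt((1-c)/k) 1_S - sqrt c e_n give <U_S, V_i> = (1-c)/sqrt k * [i in S] - c, which is an
   embedding of margin c once (1-c)/sqrt k = 2c, i.e. c = 1/(2 sqrt k + 1). *)

theory Submission
  imports Defs "HOL-Analysis.Convex"
begin

lemma card_subsets_containing_remove:
  assumes "finite A" "x \<in> A" "0 < k"
  shows "card {S. S \<subseteq> A \<and> card S = k \<and> x \<in> S \<and> P S}
       = card {T. T \<subseteq> A - {x} \<and> card T = k - 1 \<and> P (insert x T)}"
proof -
  have "bij_betw (insert x) {T. T \<subseteq> A - {x} \<and> card T = k - 1 \<and> P (insert x T)}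
                            {S. S \<subseteq> A \<and> card S = k \<and> x \<in> S \<and> P S}"
  proof (rule bij_betw_byWitness[where f' = "\<lambda>S. S - {x}"])
    show "(\<lambda>S. S - {x}) ` {S. S \<subseteq> A \<and> card S = k \<and> x \<in> S \<and> P S}
          \<subseteq> {T. T \<subseteq> A - {x} \<and> card T = k - 1 \<and> P (insert x T)}"
      using assms(1) by (auto simp: insert_absorb dest: finite_subset)
    show "insert x ` {T. T \<subseteq> A - {x} \<and> card T = k - 1 \<and> P (insert x T)}
          \<subseteq> {S. S \<subseteq> A \<and> card S = k \<and> x \<in> S \<and> P S}"
    proof (intro subsetI, elim imageE CollectE conjE)
      fix S T assume T: "T \<subseteq> A - {x}" "card T = k - 1" "P (insert x T)" and S: "S = insert x T"
      have "finite T" "x \<notin> T" using T(1) assms(1) finite_subset by auto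
      then show "S \<in> {S. S \<subseteq> A \<and> card S = k \<and> x \<in> S \<and> P S}"
        using S T assms by auto
    qed
  qed auto
  then show ?thesis by (simp add: bij_betw_same_card)
qed

lemma card_subsets_containing:
  assumes "finite A" "x \<in> A"
  shows "card A * card {S. S \<subseteq> A \<and> card S = k \<and> x \<in> S} = k * (card A choose k)"
proof (cases "k = 0")
  case True
  then have "{S. S \<subseteq> A \<and> card S = k \<and> x \<in> S} = {}"
    using assms(1) finite_subset by fastforce
  then show ?thesis using True by (simp only: card.empty mult_0 mult_0_right)
next
  case False
  then have "card {S. S \<subseteq> A \<and> card S = k \<and> x \<in> S} = (card A - 1) choose (k - 1)"
    using card_subsets_containing_remove[OF assms, of k "\<lambda>_. True"] n_subsets[of "A - {x}"] assms
    by simp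
  then show ?thesis using times_binomial_minus1_eq[of k "card A"] False by simp
qed

lemma card_subsets_containing_pair:
  assumes "finite A" "x \<in> A" "y \<in> A" "x \<noteq> y"
  shows "card A * (card A - 1) * card {S. S \<subseteq> A \<and> card S = k \<and> x \<in> S \<and> y \<in> S}
       = k * (k - 1) * (card A choose k)"
proof (cases "k = 0")
  case True
  then have "{S. S \<subseteq> A \<and> card S = k \<and> x \<in> S \<and> y \<in> S} = {}"
    using assms(1) finite_subset by fastforce
  then show ?thesis using True by (simp only: card.empty mult_0 mult_0_right)
next
  case False
  have "card {S. S \<subseteq> A \<and> card S = k \<and> x \<in> S \<and> y \<in> S}
      = card {T. T \<subseteq> A - {x} \<and> card T = k - 1 \<and> y \<in> T}"
    using card_subsets_containing_remove[OF assms(1,2), of k "\<lambda>S. y \<in> S"] False assms(4) by simp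
  moreover have "(card A - 1) * card {T. T \<subseteq> A - {x} \<and> card T = k - 1 \<and> y \<in> T}
      = (k - 1) * ((card A - 1) choose (k - 1))"
    using card_subsets_containing[of "A - {x}" y "k - 1"] assms by simp
  moreover have "card A * ((card A - 1) choose (k - 1)) = k * (card A choose k)"
    using times_binomial_minus1_eq[of k "card A"] False by simp
  ultimately show ?thesis by (simp add: ac_simps)
qed

lemma card_subsets_containing_pair_real:
  assumes "finite A" "i \<in> A" "j \<in> A"
  shows "real (card A) * (real (card A) - 1) * card {S. S \<subseteq> A \<and> card S = k \<and> i \<in> S \<and> j \<in> S}
       = real k * (real k - 1) * (card A choose k)
         + (if i = j then real k * (real (card A) - real k) * (card A choose k) else 0)"
proof (cases "i = j")
  case True
  have "real (card A) * card {S. S \<subseteq> A \<and> card S = k \<and> i \<in> S} = real k * (card A choose k)"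
    using card_subsets_containing[OF assms(1,2), of k] by (metis of_nat_mult)
  then show ?thesis using True by (simp add: algebra_simps)
next
  case False
  have "real (card A - 1) = real (card A) - 1"
    using assms card_0_eq by (fastforce intro: of_nat_diff)
  moreover have "real (k * (k - 1)) = real k * (real k - 1)"
    by (cases k) (auto simp: algebra_simps)
  ultimately show ?thesis
    using arg_cong[OF card_subsets_containing_pair[OF assms False, of k], of real] False
    by (simp only: of_nat_mult) simp
qed

lemma sum_subsets_sum:
  assumes "finite A"
  shows "real (card A) * (\<Sum>S | S \<subseteq> A \<and> card S = k. sum x S) = real k * (card A choose k) * sum x A"
proof -
  let ?K = "{S. S \<subseteq> A \<and> card S = k}"
  have "{i \<in> A. i \<in> S} = S" if "S \<in> ?K" for S
    using that by blast
  then have "(\<Sum>S\<in>?K. sum x S) = (\<Sum>S\<in>?K. \<Sum>i\<in>{i \<in> A. i \<in> S}. x i)"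
    by simp
  also have "\<dots> = (\<Sum>i\<in>A. \<Sum>S\<in>{S \<in> ?K. i \<in> S}. x i)"
    using assms by (intro sum.swap_restrict) simp_all
  also have "\<dots> = (\<Sum>i\<in>A. card {S. S \<subseteq> A \<and> card S = k \<and> i \<in> S} * x i)"
    by (intro sum.cong refl) (simp add: conj_assoc)
  finally have "real (card A) * (\<Sum>S\<in>?K. sum x S)
      = (\<Sum>i\<in>A. real (card A * card {S. S \<subseteq> A \<and> card S = k \<and> i \<in> S}) * x i)"
    by (simp add: sum_distrib_left mult.assoc)
  also have "\<dots> = (\<Sum>i\<in>A. real k * (card A choose k) * x i)"
    using card_subsets_containing[OF assms] by (intro sum.cong refl) simp
  finally show ?thesis by (simp add: sum_distrib_left)
qed

lemma sum_subsets_sum_sq: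
  assumes "finite A"
  shows "real (card A) * (real (card A) - 1) * (\<Sum>S | S \<subseteq> A \<and> card S = k. (sum x S)\<^sup>2)
       = real k * (card A choose k)
         * ((real k - 1) * (sum x A)\<^sup>2 + (real (card A) - real k) * (\<Sum>i\<in>A. (x i)\<^sup>2))"
proof -
  let ?K = "{S. S \<subseteq> A \<and> card S = k}"
  let ?n = "real (card A)" and ?N = "real (card A choose k)"
  let ?c = "\<lambda>i j. real (card {S. S \<subseteq> A \<and> card S = k \<and> i \<in> S \<and> j \<in> S})"
  have "(sum x S)\<^sup>2 = (\<Sum>i\<in>A. \<Sum>j\<in>A. if i \<in> S \<and> j \<in> S then x i * x j else 0)"
    if "S \<in> ?K" for S
  proof -
    have "sum x S = (\<Sum>i\<in>A. if i \<in> S then x i else 0)"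
      using that assms by (simp add: sum.inter_restrict[symmetric] Int_absorb1)
    then show ?thesis
      by (simp only: power2_eq_square sum_product) (intro sum.cong refl, simp)
  qed
  then have "(\<Sum>S\<in>?K. (sum x S)\<^sup>2)
      = (\<Sum>S\<in>?K. \<Sum>i\<in>A. \<Sum>j\<in>A. if i \<in> S \<and> j \<in> S then x i * x j else 0)"
    by simp
  also have "\<dots> = (\<Sum>i\<in>A. \<Sum>j\<in>A. \<Sum>S\<in>?K. if i \<in> S \<and> j \<in> S then x i * x j else 0)"
    by (simp add: sum.swap[of _ ?K] sum.swap[of _ ?K A])
  also have "\<dots> = (\<Sum>i\<in>A. \<Sum>j\<in>A. x i * x j * ?c i j)"
    using assms by (intro sum.cong refl) (simp add: sum.inter_filter[symmetric] conj_assoc)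
  finally have "?n * (?n - 1) * (\<Sum>S\<in>?K. (sum x S)\<^sup>2)
      = (\<Sum>i\<in>A. \<Sum>j\<in>A. x i * x j * (?n * (?n - 1) * ?c i j))"
    by (simp add: sum_distrib_left ac_simps)
  also have "\<dots> = (\<Sum>i\<in>A. \<Sum>j\<in>A. x i * x j * (real k * (real k - 1) * ?N)
                   + (if i = j then x i * x j * (real k * (?n - real k) * ?N) else 0))"
  proof (intro sum.cong refl)
    fix i j assume "i \<in> A" "j \<in> A"
    then show "x i * x j * (?n * (?n - 1) * ?c i j) = x i * x j * (real k * (real k - 1) * ?N)
               + (if i = j then x i * x j * (real k * (?n - real k) * ?N) else 0)"
      by (simp only: card_subsets_containing_pair_real[OF assms] distrib_left) simp
  qed
  also have "\<dots> = real k * (real k - 1) * ?N * (sum x A)\<^sup>2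
                   + real k * (?n - real k) * ?N * (\<Sum>i\<in>A. (x i)\<^sup>2)"
    using assms by (simp add: sum.distrib sum_distrib_left sum_distrib_right power2_eq_square ac_simps)
  finally show ?thesis by (simp add: algebra_simps)
qed

lemma sum_subsets_centered_sq:
  assumes "finite A"
  shows "(real (card A) - 1)
           * (\<Sum>S | S \<subseteq> A \<and> card S = k. (real (card A) * sum x S - real k * sum x A)\<^sup>2)
       = real k * (real (card A) - real k) * (card A choose k)
           * (real (card A) * (\<Sum>i\<in>A. (x i)\<^sup>2) - (sum x A)\<^sup>2)"
proof -
  let ?K = "{S. S \<subseteq> A \<and> card S = k}"
  let ?n = "real (card A)" and ?N = "real (card A choose k)"
  define T where "T = sum x A"
  define Q where "Q = (\<Sum>i\<in>A. (x i)\<^sup>2)"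
  define A1 where "A1 = (\<Sum>S\<in>?K. sum x S)"
  define A2 where "A2 = (\<Sum>S\<in>?K. (sum x S)\<^sup>2)"
  have A1: "?n * A1 = real k * ?N * T"
    unfolding A1_def T_def using sum_subsets_sum[OF assms] .
  have A2: "?n * (?n - 1) * A2 = real k * ?N * ((real k - 1) * T\<^sup>2 + (?n - real k) * Q)"
    unfolding A2_def T_def Q_def using sum_subsets_sum_sq[OF assms] .
  have "(\<Sum>S\<in>?K. (?n * sum x S - real k * T)\<^sup>2)
      = (\<Sum>S\<in>?K. ?n\<^sup>2 * (sum x S)\<^sup>2 - 2 * ?n * real k * T * sum x S + (real k * T)\<^sup>2)"
    by (intro sum.cong refl) (simp add: power2_eq_square algebra_simps)
  also have "\<dots> = ?n\<^sup>2 * A2 - 2 * real k * T * (?n * A1) + ?N * (real k * T)\<^sup>2"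
    unfolding A1_def A2_def
    by (simp add: sum.distrib sum_subtractf sum_distrib_left n_subsets assms ac_simps)
  finally have "(?n - 1) * (\<Sum>S\<in>?K. (?n * sum x S - real k * T)\<^sup>2)
      = ?n * (?n * (?n - 1) * A2) - 2 * real k * T * (?n - 1) * (?n * A1) + (?n - 1) * ?N * (real k * T)\<^sup>2"
    by (simp only:) (simp add: power2_eq_square algebra_simps)
  also have "\<dots> = real k * (?n - real k) * ?N * (?n * Q - T\<^sup>2)"
    unfolding A1 A2 by (simp add: power2_eq_square algebra_simps)
  finally show ?thesis unfolding T_def Q_def .
qed

lemma dinner_Cauchy_Schwarz: "(dinner d u v)\<^sup>2 \<le> dinner d u u * dinner d v v"
  unfolding dinner_def using Cauchy_Schwarz_ineq_sum[of u v "{..<d}"] by (simp add: power2_eq_square)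

lemma dinner_sum_right: "dinner d u (\<lambda>l. \<Sum>i\<in>I. v i l) = (\<Sum>i\<in>I. dinner d u (v i))"
  unfolding dinner_def sum_distrib_left by (rule sum.swap)

definition centered_row_combination ::
  "nat \<Rightarrow> nat \<Rightarrow> (nat \<Rightarrow> nat \<Rightarrow> real) \<Rightarrow> nat set \<Rightarrow> nat \<Rightarrow> real" where
  "centered_row_combination n k V S = (\<lambda>l. real n * (\<Sum>i\<in>S. V i l) - real k * (\<Sum>i<n. V i l))"

lemma centered_row_combination_margin:
  assumes S: "S \<subseteq> {..<n}" "card S = k"
    and pos: "\<And>i. i \<in> S \<Longrightarrow> m \<le> dinner d u (V i)"
    and neg: "\<And>i. i < n \<Longrightarrow> i \<notin> S \<Longrightarrow> dinner d u (V i) \<le> - m"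
  shows "2 * real k * (real n - real k) * m \<le> dinner d u (centered_row_combination n k V S)"
proof -
  let ?a = "\<lambda>i. dinner d u (V i)"
  have fin: "finite S" using finite_subset[OF S(1)] by simp
  have kn: "k \<le> n" using card_mono[OF finite_lessThan S(1)] S(2) by simp
  have "dinner d u (centered_row_combination n k V S)
      = real n * dinner d u (\<lambda>l. \<Sum>i\<in>S. V i l) - real k * dinner d u (\<lambda>l. \<Sum>i<n. V i l)"
    unfolding dinner_def centered_row_combination_def
    by (simp add: right_diff_distrib sum_subtractf sum_distrib_left ac_simps)
  also have "\<dots> = real n * (\<Sum>i\<in>S. ?a i) - real k * (\<Sum>i<n. ?a i)"
    by (simp only: dinner_sum_right)
  also have "(\<Sum>i<n. ?a i) = (\<Sum>i\<in>S. ?a i) + (\<Sum>i\<in>{..<n} - S. ?a i)"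
    using S by (simp add: sum.subset_diff)
  finally have split: "dinner d u (centered_row_combination n k V S)
      = (real n - real k) * (\<Sum>i\<in>S. ?a i) + real k * - (\<Sum>i\<in>{..<n} - S. ?a i)"
    by (simp add: algebra_simps)
  have "real k * m \<le> (\<Sum>i\<in>S. ?a i)"
    using sum_mono[of S "\<lambda>_. m" ?a] pos S by auto
  then have in_S: "(real n - real k) * (real k * m) \<le> (real n - real k) * (\<Sum>i\<in>S. ?a i)"
    using kn by (intro mult_left_mono) auto
  have "(\<Sum>i\<in>{..<n} - S. ?a i) \<le> - ((real n - real k) * m)"
    using sum_mono[of "{..<n} - S" ?a "\<lambda>_. - m"] neg S fin kn
    by (auto simp: card_Diff_subset of_nat_diff)
  then have off_S: "real k * ((real n - real k) * m) \<le> real k * - (\<Sum>i\<in>{..<n} - S. ?a i)"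
    by (intro mult_left_mono) auto
  show ?thesis using in_S off_S unfolding split by (simp add: algebra_simps)
qed

lemma sum_S_rows_norm_centered_row_combination:
  "(real n - 1) * (\<Sum>S\<in>S_rows n k. dinner d (centered_row_combination n k V S) (centered_row_combination n k V S))
   = real k * (real n - real k) * (n choose k)
     * (real n * (\<Sum>i<n. dinner d (V i) (V i)) - dinner d (\<lambda>l. \<Sum>i<n. V i l) (\<lambda>l. \<Sum>i<n. V i l))"
proof -
  let ?C = "centered_row_combination n k V"
  have "(real n - 1) * (\<Sum>S\<in>S_rows n k. dinner d (?C S) (?C S))
      = (\<Sum>l<d. (real n - 1) * (\<Sum>S\<in>S_rows n k. (?C S l)\<^sup>2))"
    unfolding dinner_def power2_eq_square sum_distrib_left by (rule sum.swap)
  also have "\<dots> = (\<Sum>l<d. real k * (real n - real k) * (n choose k)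
                              * (real n * (\<Sum>i<n. (V i l)\<^sup>2) - (\<Sum>i<n. V i l)\<^sup>2))"
    using sum_subsets_centered_sq[where A = "{..<n}" and k = k]
    unfolding centered_row_combination_def S_rows_def by simp
  also have "\<dots> = real k * (real n - real k) * (n choose k)
      * (real n * (\<Sum>l<d. \<Sum>i<n. (V i l)\<^sup>2) - (\<Sum>l<d. (\<Sum>i<n. V i l)\<^sup>2))"
    by (simp add: sum_subtractf sum_distrib_left right_diff_distrib mult.assoc)
  also have "(\<Sum>l<d. \<Sum>i<n. (V i l)\<^sup>2) = (\<Sum>i<n. dinner d (V i) (V i))"
    unfolding dinner_def power2_eq_square by (rule sum.swap)
  also have "(\<Sum>l<d. (\<Sum>i<n. V i l)\<^sup>2) = dinner d (\<lambda>l. \<Sum>i<n. V i l) (\<lambda>l. \<Sum>i<n. V i l)"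
    unfolding dinner_def power2_eq_square ..
  finally show ?thesis .
qed

lemma rd_embedding_S_mat_margin_bound:
  assumes emb: "rd_embedding d (S_rows n k) n S_mat m" and k: "0 < k" "k < n"
  shows "4 * real k * (real n - real k) * (real n - 1) * m\<^sup>2 \<le> (real n)\<^sup>2"
proof -
  let ?R = "S_rows n k" and ?N = "real (n choose k)"
  obtain U V where m: "m \<ge> 0" and U: "\<forall>S\<in>?R. unitvec d (U S)" and V: "\<forall>i<n. unitvec d (V i)"
    and UV: "\<forall>S\<in>?R. \<forall>i<n. (i \<in> S \<longrightarrow> dinner d (U S) (V i) \<ge> m) \<and> (i \<notin> S \<longrightarrow> dinner d (U S) (V i) \<le> - m)"
    using emb unfolding rd_embedding_def S_mat_def by blast
  let ?C = "centered_row_combination n k V"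
  have each: "(2 * real k * (real n - real k) * m)\<^sup>2 \<le> dinner d (?C S) (?C S)" if S: "S \<in> ?R" for S
  proof -
    have "S \<subseteq> {..<n}" "card S = k" using S unfolding S_rows_def by auto
    then have "2 * real k * (real n - real k) * m \<le> dinner d (U S) (?C S)"
      using UV S by (intro centered_row_combination_margin) auto
    then have "(2 * real k * (real n - real k) * m)\<^sup>2 \<le> (dinner d (U S) (?C S))\<^sup>2"
      using m k by (intro power_mono) auto
    also have "\<dots> \<le> dinner d (?C S) (?C S)"
      using dinner_Cauchy_Schwarz[of d "U S" "?C S"] U S unfolding unitvec_def by simp
    finally show ?thesis .
  qed
  have "?N * (2 * real k * (real n - real k) * m)\<^sup>2 = (\<Sum>S\<in>?R. (2 * real k * (real n - real k) * m)\<^sup>2)"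
    by (simp add: S_rows_def n_subsets)
  also have "\<dots> \<le> (\<Sum>S\<in>?R. dinner d (?C S) (?C S))"
    using each by (rule sum_mono)
  finally have "?N * (2 * real k * (real n - real k) * m)\<^sup>2 \<le> (\<Sum>S\<in>?R. dinner d (?C S) (?C S))" .
  then have "(real n - 1) * (?N * (2 * real k * (real n - real k) * m)\<^sup>2)
      \<le> (real n - 1) * (\<Sum>S\<in>?R. dinner d (?C S) (?C S))"
    using k by (intro mult_left_mono) auto
  then have "(real k * (real n - real k) * ?N) * (4 * real k * (real n - real k) * (real n - 1) * m\<^sup>2)
      \<le> (real n - 1) * (\<Sum>S\<in>?R. dinner d (?C S) (?C S))"
    by (simp add: power2_eq_square algebra_simps)
  also have "\<dots> \<le> (real k * (real n - real k) * ?N) * (real n * (\<Sum>i<n. dinner d (V i) (V i)))"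
    unfolding sum_S_rows_norm_centered_row_combination using k
    by (intro mult_left_mono) (auto simp: dinner_def intro: sum_nonneg)
  also have "\<dots> = (real k * (real n - real k) * ?N) * (real n)\<^sup>2"
    using V unfolding unitvec_def by (simp add: power2_eq_square)
  finally show ?thesis using k by (simp add: mult_le_cancel_left_pos)
qed

lemma dinner_indicator_plus_last:
  assumes "A \<subseteq> {..<n}" "B \<subseteq> {..<n}"
  shows "dinner (Suc n) (\<lambda>l. (if l \<in> A then a else 0) + (if l = n then \<alpha> else 0))
                        (\<lambda>l. (if l \<in> B then b else 0) + (if l = n then \<beta> else 0))
         = real (card (A \<inter> B)) * (a * b) + \<alpha> * \<beta>"
proof -
  have "n \<notin> A" "n \<notin> B" using assms by auto
  moreover have "(\<Sum>l<n. ((if l \<in> A then a else 0) + (if l = n then \<alpha> else 0))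
                        * ((if l \<in> B then b else 0) + (if l = n then \<beta> else 0)))
      = (\<Sum>l<n. if l \<in> A \<inter> B then a * b else 0)"
    by (intro sum.cong refl) auto
  moreover have "\<dots> = (\<Sum>l\<in>{..<n} \<inter> (A \<inter> B). a * b)"
    by (rule sum.inter_restrict[symmetric]) simp
  moreover have "{..<n} \<inter> (A \<inter> B) = A \<inter> B" using assms by auto
  ultimately show ?thesis unfolding dinner_def by simp
qed

lemma rd_embedding_S_mat_explicit:
  assumes "0 < k"
  shows "rd_embedding (Suc n) (S_rows n k) n S_mat (1 / (2 * sqrt (real k) + 1))"
proof -
  define s where "s = sqrt (real k)"
  define c where "c = 1 / (2 * s + 1)"
  define p where "p = sqrt (1 - c)"
  define q where "q = sqrt c"
  define u where "u = p / s"
  have s: "1 \<le> s" "s * s = real k" unfolding s_def using assms by auto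
  then have c: "0 < c" "c < 1" "1 - c = 2 * s * c"
    unfolding c_def by (auto simp: field_simps)
  have pq: "p * p = 1 - c" "q * q = c" "u * p = 2 * c" "real k * (u * u) = 1 - c"
    unfolding u_def p_def q_def using c s assms by (auto simp: field_simps)
  define V where "V i = (\<lambda>l. (if l \<in> {i} then p else 0) + (if l = n then q else 0))" for i
  define U where "U S = (\<lambda>l. (if l \<in> S then u else 0) + (if l = n then - q else 0))" for S
  have "rd_embedding (Suc n) (S_rows n k) n S_mat c"
    unfolding rd_embedding_def
  proof (intro conjI exI[of _ U] exI[of _ V] ballI allI impI)
    show "0 \<le> c" using c by simp
  next
    fix S assume "S \<in> S_rows n k"
    then have "S \<subseteq> {..<n}" "card S = k" unfolding S_rows_def by auto
    then show "unitvec (Suc n) (U S)"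
      unfolding unitvec_def U_def using dinner_indicator_plus_last pq by simp
  next
    fix i assume "i < n"
    then show "unitvec (Suc n) (V i)"
      unfolding unitvec_def V_def using dinner_indicator_plus_last[of "{i}" n "{i}"] pq by simp
  next
    fix S i assume "S \<in> S_rows n k" "i < n"
    then have "dinner (Suc n) (U S) (V i) = real (card (S \<inter> {i})) * (2 * c) - c"
      unfolding U_def V_def S_rows_def using dinner_indicator_plus_last[of S n "{i}"] pq by simp
    then show "S_mat S i \<Longrightarrow> c \<le> dinner (Suc n) (U S) (V i)"
      and "\<not> S_mat S i \<Longrightarrow> dinner (Suc n) (U S) (V i) \<le> - c"
      unfolding S_mat_def by auto
  qed
  then show ?thesis unfolding c_def s_def .
qed

lemma rd_embedding_le_m_rd_inf:
  assumes "rd_embedding d R n A m"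
  shows "ereal m \<le> m_rd_inf R n A"
proof -
  have "ereal m \<le> m_rd d R n A"
    unfolding m_rd_def using assms by (auto intro: Sup_upper)
  also have "\<dots> \<le> m_rd_inf R n A"
    unfolding m_rd_inf_def by (rule SUP_upper) simp
  finally show ?thesis .
qed

lemma m_rd_inf_le:
  assumes "\<And>d m. rd_embedding d R n A m \<Longrightarrow> m \<le> B"
  shows "m_rd_inf R n A \<le> ereal B"
  unfolding m_rd_inf_def m_rd_def using assms by (auto intro!: SUP_least Sup_least)

lemma m_rd_inf_S_mat_ge:
  assumes "0 < k"
  shows "ereal (1 / (2 * sqrt (real k) + 1)) \<le> m_rd_inf (S_rows n k) n S_mat"
  using rd_embedding_le_m_rd_inf[OF rd_embedding_S_mat_explicit[OF assms]] .

lemma m_rd_inf_S_mat_le: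
  assumes "0 < k" "k < n"
  shows "m_rd_inf (S_rows n k) n S_mat \<le> ereal (real n / (2 * sqrt (real k) * (real n - real k)))"
proof (rule m_rd_inf_le)
  fix d m assume emb: "rd_embedding d (S_rows n k) n S_mat m"
  have "m \<ge> 0" using emb unfolding rd_embedding_def by simp
  have "(2 * sqrt (real k) * (real n - real k) * m)\<^sup>2 = 4 * real k * (real n - real k) * (real n - real k) * m\<^sup>2"
    by (simp add: power2_eq_square)
  also have "\<dots> \<le> 4 * real k * (real n - real k) * (real n - 1) * m\<^sup>2"
    using assms by (intro mult_right_mono mult_left_mono) auto
  also have "\<dots> \<le> (real n)\<^sup>2"
    using rd_embedding_S_mat_margin_bound[OF emb assms] .
  finally have "2 * sqrt (real k) * (real n - real k) * m \<le> real n"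
    by (rule power2_le_imp_le) simp
  then show "m \<le> real n / (2 * sqrt (real k) * (real n - real k))"
    using assms by (simp add: pos_le_divide_eq ac_simps)
qed

lemma m_rd_inf_S_mat_approx:
  assumes "0 < k" "k < n"
  obtains r where "m_rd_inf (S_rows n k) n S_mat = ereal r"
    and "\<bar>2 * sqrt (real k) * r - 1\<bar> \<le> max (1 / (2 * sqrt (real k) + 1)) (real k / (real n - real k))"
proof -
  define s where "s = sqrt (real k)"
  have s: "1 \<le> s" unfolding s_def using assms by simp
  obtain r where r: "m_rd_inf (S_rows n k) n S_mat = ereal r"
    "1 / (2 * s + 1) \<le> r" "r \<le> real n / (2 * s * (real n - real k))"
    using m_rd_inf_S_mat_ge[OF assms(1), of n] m_rd_inf_S_mat_le[OF assms] unfolding s_def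
    by (cases "m_rd_inf (S_rows n k) n S_mat") auto
  have "1 - 1 / (2 * s + 1) = 2 * s * (1 / (2 * s + 1))"
    using s by (simp add: field_simps)
  also have "\<dots> \<le> 2 * s * r" using r(2) s by (intro mult_left_mono) auto
  finally have lower: "1 - 2 * s * r \<le> 1 / (2 * s + 1)" by simp
  have "2 * s * r \<le> 2 * s * (real n / (2 * s * (real n - real k)))"
    using r(3) s by (intro mult_left_mono) auto
  also have "\<dots> = 1 + real k / (real n - real k)" using s assms by (simp add: field_simps)
  finally have upper: "2 * s * r - 1 \<le> real k / (real n - real k)" by simp
  show ?thesis using that[OF r(1)] lower upper unfolding s_def by linarith
qed

lemma max_error_terms_le:
  fixes \<epsilon> :: real
  assumes \<epsilon>: "0 < \<epsilon>" and k: "1 / \<epsilon>\<^sup>2 \<le> real k" "0 < k" "(1 + \<epsilon>) * real k \<le> \<epsilon> * real n"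
  shows "k < n" and "max (1 / (2 * sqrt (real k) + 1)) (real k / (real n - real k)) \<le> \<epsilon>"
proof -
  have "\<epsilon> * real k < \<epsilon> * real n" using k by (simp add: algebra_simps)
  then show "k < n" using \<epsilon> by simp
  then have "real k / (real n - real k) \<le> \<epsilon>"
    using k(3) by (simp add: pos_divide_le_eq algebra_simps)
  moreover have "1 / (2 * sqrt (real k) + 1) \<le> \<epsilon>"
  proof -
    have "1 / \<epsilon> \<le> sqrt (real k)"
      using k \<epsilon> by (intro real_le_rsqrt) (auto simp: power_one_over)
    then have "1 \<le> \<epsilon> * (2 * sqrt (real k) + 1)"
      using \<epsilon> by (simp add: field_simps)
    moreover have "0 < 2 * sqrt (real k) + 1"
      by (simp add: add_nonneg_pos)
    ultimately show ?thesis by (simp add: pos_divide_le_eq mult.commute)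
  qed
  ultimately show "max (1 / (2 * sqrt (real k) + 1)) (real k / (real n - real k)) \<le> \<epsilon>"
    by simp
qed

theorem corollary1p1:
  shows "\<forall>\<epsilon>>0. \<exists>K::nat. \<exists>\<delta>>0. \<forall>n k::nat. K \<le> k \<and> real k \<le> \<delta> * real n \<longrightarrow>
           (\<exists>r. m_rd_inf (S_rows n k) n S_mat = ereal r \<and>
                \<bar>2 * sqrt (real k) * r - 1\<bar> \<le> \<epsilon>)"
proof (intro allI impI)
  fix \<epsilon> :: real assume \<epsilon>: "\<epsilon> > 0"
  define K where "K = max 1 (nat \<lceil>1 / \<epsilon>\<^sup>2\<rceil>)"
  have "\<exists>r. m_rd_inf (S_rows n k) n S_mat = ereal r \<and> \<bar>2 * sqrt (real k) * r - 1\<bar> \<le> \<epsilon>"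
    if nk: "K \<le> k \<and> real k \<le> \<epsilon> / (1 + \<epsilon>) * real n" for n k :: nat
  proof -
    have k: "1 / \<epsilon>\<^sup>2 \<le> real k" "0 < k"
      using nk unfolding K_def by (auto intro: order.trans[OF real_nat_ceiling_ge])
    have "(1 + \<epsilon>) * real k \<le> \<epsilon> * real n"
      using nk \<epsilon> by (simp add: field_simps)
    note error = max_error_terms_le[OF \<epsilon> k this]
    obtain r where "m_rd_inf (S_rows n k) n S_mat = ereal r"
      "\<bar>2 * sqrt (real k) * r - 1\<bar> \<le> max (1 / (2 * sqrt (real k) + 1)) (real k / (real n - real k))"
      using m_rd_inf_S_mat_approx[OF k(2) error(1)] .
    then show ?thesis using error(2) by auto
  qed
  moreover have "0 < \<epsilon> / (1 + \<epsilon>)" using \<epsilon> by simp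
  ultimately show "\<exists>K::nat. \<exists>\<delta>>0. \<forall>n k::nat. K \<le> k \<and> real k \<le> \<delta> * real n \<longrightarrow>
           (\<exists>r. m_rd_inf (S_rows n k) n S_mat = ereal r \<and> \<bar>2 * sqrt (real k) * r - 1\<bar> \<le> \<epsilon>)"
    by blast
qed

end
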